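(* Let $d\ge2$, $\kappa,l,\lambda>0$, $k\in\{0,1\}$, $\mu>0$, $\varphi_o>0$. Suppose $\varphi:[0,\infty)\to(0,\infty)$ is continuous with $\varphi(0)=\varphi_o$, $\lim_{u\to\infty}\varphi(u)=0$, and for all $u\ge0$ $$\int_{\varphi_o}^{\varphi(u)}\frac{d\bar\varphi}{\sqrt{\frac{d(d-1)}{\kappa^2l^2}\mu+k\frac{(d-1)^2}{4l^2}\bar\varphi^2+\lambda\bar\varphi^{\frac{2(d+1)}{d-1}}}}=-l\int_0^u\frac{d\bar u}{\sqrt{1+k\bar u^2+\mu\bar u^{d+1}}}$$ (i.e. the domain wall solution of the conformally coupled scalar with these parameters is regular, $u$ ranging over $[0,\infty)$). Then necessarily $$\lambda<\Big(\frac{(d-1)^d\kappa^2}{2^{d+1}d\,l^{d-1}}\Big)^{\frac2{d-1}}.$$ In particular no such regular solution exists for $d=2$ with $\sqrt\lambda=\kappa^2/(16l)$, nor for $d=3$ with $\lambda=\kappa^2/(6l^2)$. *)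

theory Defs
  imports "HOL-Analysis.Analysis"
begin

end

theory Submission
  imports Defs "HOL-Real_Asymp.Real_Asymp"
begin

(*
  Write F_lam = phi_integrand d kap l mu k lam and G = u_integrand d k mu for the two integrands of
  the wall equation, and lam_c = critical_coupling d kap l. At lam_c the singular profile
  Psi = critical_profile d kap, a multiple of x powr (-(d - 1)/2), solves the equation exactly: the substitution
  p = Psi x turns F_lam_c p dp into -l * G x dx. If lam >= lam_c then F_lam <= F_lam_c, so the wall
  equation at u gives  int_0^u G <= int_v0^w G,  where Psi v0 = phio and Psi w = phi u. Hence the
  fixed positive number int_0^v0 G is at most int_u^w G <= 2 / sqrt (mu * u), because
  G x <= (mu * x^3) powr (-1/2); this fails for large u.
*)

definition phi_integrand :: "nat \<Rightarrow> real \<Rightarrow> real \<Rightarrow> real \<Rightarrow> real \<Rightarrow> real \<Rightarrow> real \<Rightarrow> real" where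
  "phi_integrand d kap l mu k lam p =
     1 / sqrt (real d * (real d - 1) / (kap^2 * l^2) * mu + k * (real d - 1)^2 / (4 * l^2) * p^2
       + lam * p powr (2 * (real d + 1) / (real d - 1)))"

definition u_integrand :: "nat \<Rightarrow> real \<Rightarrow> real \<Rightarrow> real \<Rightarrow> real" where
  "u_integrand d k mu v = 1 / sqrt (1 + k * v^2 + mu * v^(d+1))"

definition critical_coupling :: "nat \<Rightarrow> real \<Rightarrow> real \<Rightarrow> real" where
  "critical_coupling d kap l =
     ((real d - 1)^d * kap^2 / (2^(d+1) * real d * l^(d-1))) powr (2 / (real d - 1))"

definition critical_amplitude :: "nat \<Rightarrow> real \<Rightarrow> real" where
  "critical_amplitude d kap = 2 / kap * sqrt (real d / (real d - 1))"

definition critical_profile :: "nat \<Rightarrow> real \<Rightarrow> real \<Rightarrow> real" where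
  "critical_profile d kap x = critical_amplitude d kap * x powr (- (real d - 1) / 2)"

lemma interval_integral_eq_integral_continuous:
  fixes f :: "real \<Rightarrow> real"
  assumes "a \<le> b" "continuous_on {a..b} f"
  shows "(LBINT x=a..b. f x) = integral {a..b} f"
  using interval_integral_eq_integral[OF assms(1) borel_integrable_atLeastAtMost'[OF assms(2)]]
  by simp

lemma u_radicand_pos:
  fixes k mu v :: real
  assumes "0 \<le> k" "0 < mu" "0 \<le> v"
  shows "0 < 1 + k * v^2 + mu * v^(d+1)"
  using assms by (intro add_pos_nonneg mult_nonneg_nonneg zero_le_power) auto

lemma u_integrand_pos:
  assumes "0 \<le> k" "0 < mu" "0 \<le> v"
  shows "0 < u_integrand d k mu v"
  using u_radicand_pos[OF assms] by (simp add: u_integrand_def)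

lemma continuous_on_u_integrand:
  assumes "0 \<le> k" "0 < mu"
  shows "continuous_on {0..} (u_integrand d k mu)"
  unfolding u_integrand_def
  by (intro continuous_intros) (metis atLeast_iff u_radicand_pos[OF assms] real_sqrt_gt_zero less_irrefl)

lemma u_integrand_integrable:
  assumes "0 \<le> k" "0 < mu" "0 \<le> a"
  shows "u_integrand d k mu integrable_on {a..b}"
  using assms
  by (intro integrable_continuous_interval continuous_on_subset[OF continuous_on_u_integrand]) auto

lemma u_integrand_le_power:
  assumes "2 \<le> d" "0 \<le> k" "0 < mu" "1 \<le> v"
  shows "u_integrand d k mu v \<le> 1 / (v * sqrt (mu * v))"
proof -
  have "mu * v^3 \<le> mu * v^(d+1)"
    using assms by (intro mult_left_mono power_increasing) auto
  moreover have "0 \<le> k * v^2" using assms by simp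
  ultimately have "sqrt (mu * v^3) \<le> sqrt (1 + k * v^2 + mu * v^(d+1))"
    by simp
  moreover have "sqrt (mu * v^3) = v * sqrt (mu * v)"
    using assms by (simp add: real_sqrt_mult power3_eq_cube)
  ultimately show ?thesis
    using assms u_radicand_pos[OF assms(2,3), of v d]
    unfolding u_integrand_def by (intro divide_left_mono) auto
qed

lemma integral_u_integrand_pos:
  assumes "0 \<le> k" "0 < mu" "0 < v"
  shows "0 < integral {0..v} (u_integrand d k mu)"
proof -
  have "integral {0..v} (\<lambda>_. 0) < integral {0..v} (u_integrand d k mu)"
    using assms
    by (intro integral_less_real continuous_on_subset[OF continuous_on_u_integrand] u_integrand_pos) auto
  then show ?thesis by simp
qed

lemma integral_u_integrand_tail_le:
  assumes "2 \<le> d" "0 \<le> k" "0 < mu" "1 \<le> u" "u \<le> w"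
  shows "integral {u..w} (u_integrand d k mu) \<le> 2 / sqrt (mu * u)"
proof -
  have antiderivative:
    "((\<lambda>v. 1 / (v * sqrt (mu * v))) has_integral 2 / sqrt (mu * u) - 2 / sqrt (mu * w)) {u..w}"
  proof -
    have "((\<lambda>v. - 2 / sqrt (mu * v)) has_real_derivative 1 / (v * sqrt (mu * v))) (at v within {u..w})"
      if "v \<in> {u..w}" for v
      using that assms
      by (auto intro!: derivative_eq_intros simp: field_simps real_sqrt_mult power3_eq_cube)
    then show ?thesis
      using fundamental_theorem_of_calculus[OF assms(5), of "\<lambda>v. - 2 / sqrt (mu * v)"]
      by (simp add: has_real_derivative_iff_has_vector_derivative)
  qed
  have "integral {u..w} (u_integrand d k mu) \<le> 2 / sqrt (mu * u) - 2 / sqrt (mu * w)"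
    using assms
    by (intro has_integral_le[OF integrable_integral antiderivative]
        u_integrand_integrable u_integrand_le_power) auto
  also have "\<dots> \<le> 2 / sqrt (mu * u)"
    using assms by simp
  finally show ?thesis .
qed

lemma integral_u_integrand_le_tail:
  assumes "2 \<le> d" "0 \<le> k" "0 < mu" "0 \<le> v" "v \<le> u" "1 \<le> u" "v \<le> w"
  shows "integral {v..w} (u_integrand d k mu)
    \<le> integral {v..u} (u_integrand d k mu) + 2 / sqrt (mu * u)"
proof (cases "w \<le> u")
  case True
  have "integral {v..w} (u_integrand d k mu) + integral {w..u} (u_integrand d k mu)
      = integral {v..u} (u_integrand d k mu)"
    using True assms
    by (intro Henstock_Kurzweil_Integration.integral_combine u_integrand_integrable) auto
  moreover have "0 \<le> integral {w..u} (u_integrand d k mu)"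
    using assms
    by (intro integral_nonneg u_integrand_integrable) (auto intro!: less_imp_le[OF u_integrand_pos])
  moreover have "0 \<le> 2 / sqrt (mu * u)"
    using assms by simp
  ultimately show ?thesis by linarith
next
  case False
  have "integral {v..u} (u_integrand d k mu) + integral {u..w} (u_integrand d k mu)
      = integral {v..w} (u_integrand d k mu)"
    using False assms
    by (intro Henstock_Kurzweil_Integration.integral_combine u_integrand_integrable) auto
  moreover have "integral {u..w} (u_integrand d k mu) \<le> 2 / sqrt (mu * u)"
    using False assms by (intro integral_u_integrand_tail_le) auto
  ultimately show ?thesis by linarith
qed

lemma phi_radicand_pos:
  assumes "2 \<le> d" "0 < kap" "0 < l" "0 \<le> k" "0 < mu" "0 \<le> lam"
  shows "0 < real d * (real d - 1) / (kap^2 * l^2) * mu + k * (real d - 1)^2 / (4 * l^2) * p^2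
       + lam * p powr (2 * (real d + 1) / (real d - 1))"
  using assms by (intro add_pos_nonneg mult_pos_pos mult_nonneg_nonneg) auto

lemma continuous_on_phi_integrand:
  assumes "2 \<le> d" "0 < kap" "0 < l" "0 \<le> k" "0 < mu" "0 \<le> lam"
  shows "continuous_on {0<..} (phi_integrand d kap l mu k lam)"
  unfolding phi_integrand_def
  by (intro continuous_intros)
    (metis greaterThan_iff less_irrefl phi_radicand_pos[OF assms] real_sqrt_gt_zero)+

lemma phi_integrand_antimono_coupling:
  assumes "2 \<le> d" "0 < kap" "0 < l" "0 \<le> k" "0 < mu" "0 \<le> lam" "lam \<le> lam'" "0 < p"
  shows "phi_integrand d kap l mu k lam' p \<le> phi_integrand d kap l mu k lam p"
proof -
  have "0 \<le> lam'" using assms(6,7) by linarith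
  then show ?thesis
    unfolding phi_integrand_def
    using assms phi_radicand_pos[OF assms(1-6), of p] phi_radicand_pos[OF assms(1-5), of lam' p]
    by (intro divide_left_mono real_sqrt_le_mono add_left_mono mult_right_mono mult_pos_pos) auto
qed

lemma integral_phi_integrand_antimono_coupling:
  assumes "2 \<le> d" "0 < kap" "0 < l" "0 \<le> k" "0 < mu" "0 \<le> lam" "lam \<le> lam'" "0 < p"
  shows "integral {p..q} (phi_integrand d kap l mu k lam')
    \<le> integral {p..q} (phi_integrand d kap l mu k lam)"
proof (rule integral_le)
  have "phi_integrand d kap l mu k \<mu> integrable_on {p..q}" if "0 \<le> \<mu>" for \<mu>
    using assms(1-5,8) that
    by (intro integrable_continuous_interval continuous_on_subset[OF continuous_on_phi_integrand]) auto
  then show "phi_integrand d kap l mu k lam' integrable_on {p..q}"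
    "phi_integrand d kap l mu k lam integrable_on {p..q}"
    using assms(6,7) by auto
  show "phi_integrand d kap l mu k lam' x \<le> phi_integrand d kap l mu k lam x" if "x \<in> {p..q}" for x
    using assms that by (intro phi_integrand_antimono_coupling) auto
qed

lemma critical_coupling_pos:
  assumes "2 \<le> d" "0 < kap" "0 < l"
  shows "0 < critical_coupling d kap l"
  using assms by (simp add: critical_coupling_def)

lemma critical_coupling_scaling:
  assumes "2 \<le> d" "0 < kap" "0 < l"
  shows "critical_coupling d kap l * critical_amplitude d kap powr (2 * (real d + 1) / (real d - 1))
    = real d * (real d - 1) / (kap^2 * l^2)"
proof -
  define D where "D = real d"
  define base where "base = (D - 1)^d * kap^2 / (2^(d+1) * D * l^(d-1))"
  define a where "a = 2 / kap * sqrt (D / (D - 1))"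
  define s where "s = D * (D - 1) / (kap^2 * l^2)"
  have D1: "1 < D" using assms(1) by (simp add: D_def)
  have pos: "0 < base" "0 < a" "0 < s"
    using D1 assms(2,3) by (simp_all add: base_def a_def s_def)
  have ln_base: "ln base = D * ln (D - 1) + 2 * ln kap - (D + 1) * ln 2 - ln D - (D - 1) * ln l"
    using D1 assms(1-3) unfolding base_def
    by (simp add: ln_mult ln_div ln_realpow D_def of_nat_diff algebra_simps)
  have ln_a: "ln a = ln 2 - ln kap + (ln D - ln (D - 1)) / 2"
    using D1 assms(2) unfolding a_def by (simp add: ln_mult ln_div ln_sqrt)
  have ln_s: "ln s = ln D + ln (D - 1) - 2 * ln kap - 2 * ln l"
    using D1 assms(2,3) unfolding s_def by (simp add: ln_mult ln_div ln_realpow)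
  have "2 * ln base + 2 * (D + 1) * ln a = (D - 1) * ln s"
    unfolding ln_base ln_a ln_s by (simp add: field_simps)
  then have "(2 * ln base + 2 * (D + 1) * ln a) / (D - 1) = ln s"
    using D1 by simp
  then have "2 / (D - 1) * ln base + 2 * (D + 1) / (D - 1) * ln a = ln s"
    by (simp only: times_divide_eq_left add_divide_distrib)
  then have "ln (base powr (2 / (D - 1)) * a powr (2 * (D + 1) / (D - 1))) = ln s"
    using pos by (simp add: ln_mult ln_powr)
  then have "base powr (2 / (D - 1)) * a powr (2 * (D + 1) / (D - 1)) = s"
    using pos by (simp add: ln_inj_iff)
  then show ?thesis
    by (simp add: critical_coupling_def critical_amplitude_def base_def a_def s_def D_def)
qed

lemma critical_amplitude_pos:
  assumes "2 \<le> d" "0 < kap"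
  shows "0 < critical_amplitude d kap"
  using assms by (simp add: critical_amplitude_def)

lemma critical_profile_less_iff:
  assumes "2 \<le> d" "0 < kap" "0 < x" "0 < y"
  shows "critical_profile d kap x < critical_profile d kap y \<longleftrightarrow> y < x"
proof -
  have "- (real d - 1) / 2 < 0" using assms(1) by simp
  then have "x powr (- (real d - 1) / 2) < y powr (- (real d - 1) / 2) \<longleftrightarrow> y < x"
    using powr_less_mono2_neg assms(3,4) by (metis less_asym not_less_iff_gr_or_eq)
  then show ?thesis
    using critical_amplitude_pos[OF assms(1,2)]
    unfolding critical_profile_def by (simp add: mult_less_cancel_left_pos)
qed

lemma critical_profile_antimono:
  assumes "2 \<le> d" "0 < kap" "0 < x" "x \<le> y"
  shows "critical_profile d kap y \<le> critical_profile d kap x"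
  using critical_profile_less_iff[OF assms(1,2,3), of y] assms(3,4) by force

lemma critical_profile_surj:
  assumes "2 \<le> d" "0 < kap" "0 < y"
  obtains x where "0 < x" "critical_profile d kap x = y"
proof
  let ?a = "critical_amplitude d kap"
  have "2 / (real d - 1) * (- (real d - 1) / 2) = -1"
    using assms(1) by (simp add: divide_simps)
  then show "critical_profile d kap ((?a / y) powr (2 / (real d - 1))) = y"
    using assms critical_amplitude_pos[OF assms(1,2)]
    by (simp add: critical_profile_def powr_powr powr_minus_divide)
qed (use assms critical_amplitude_pos[OF assms(1,2)] in simp)

lemma has_real_derivative_critical_profile:
  assumes "2 \<le> d" "0 < kap" "0 < x"
  shows "(critical_profile d kap has_real_derivative
           - sqrt (real d * (real d - 1)) / kap * x powr (- (real d + 1) / 2)) (at x)"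
proof -
  have "sqrt (real d * (real d - 1)) = sqrt (real d / (real d - 1) * (real d - 1)^2)"
    using assms(1) by (simp add: power2_eq_square)
  also have "\<dots> = sqrt (real d / (real d - 1)) * (real d - 1)"
    unfolding real_sqrt_mult using assms(1) by simp
  finally have sqrt_eq: "sqrt (real d / (real d - 1)) * (real d - 1) = sqrt (real d * (real d - 1))" ..
  have "critical_amplitude d kap * (- (real d - 1) / 2)
      = - (sqrt (real d / (real d - 1)) * (real d - 1)) / kap"
    unfolding critical_amplitude_def
    by simp (metis minus_diff_eq minus_mult_right minus_divide_left)
  also have "\<dots> = - sqrt (real d * (real d - 1)) / kap"
    by (simp only: sqrt_eq)
  finally have amplitude:
    "critical_amplitude d kap * (- (real d - 1) / 2) = - sqrt (real d * (real d - 1)) / kap" .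
  have exponent: "- (real d - 1) / 2 - 1 = - (real d + 1) / 2"
    by simp
  have "critical_amplitude d kap * (- (real d - 1) / 2 * x powr (- (real d - 1) / 2 - 1))
      = - sqrt (real d * (real d - 1)) / kap * x powr (- (real d + 1) / 2)"
    unfolding mult.assoc[symmetric] amplitude exponent ..
  then show ?thesis
    unfolding critical_profile_def
    by (metis DERIV_cmult has_real_derivative_powr assms(3))
qed

lemma critical_profile_power2:
  assumes "0 < x"
  shows "(critical_profile d kap x)^2 = (critical_amplitude d kap)^2 * x powr (1 - real d)"
proof -
  have "(x powr (- (real d - 1) / 2))^2 = x powr (- (real d - 1) / 2 + - (real d - 1) / 2)"
    unfolding power2_eq_square by (rule powr_add[symmetric])
  also have "\<dots> = x powr (1 - real d)"
    by (rule arg_cong[of _ _ "(powr) x"]) (simp add: field_simps)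
  finally show ?thesis
    unfolding critical_profile_def power_mult_distrib by simp
qed

lemma critical_profile_powr:
  assumes "2 \<le> d"
  shows "critical_profile d kap x powr (2 * (real d + 1) / (real d - 1))
    = critical_amplitude d kap powr (2 * (real d + 1) / (real d - 1)) * x powr (- (real d + 1))"
proof -
  have "- (real d - 1) / 2 * (2 * (real d + 1) / (real d - 1)) = - (real d + 1)"
    using assms by (simp add: field_simps)
  then show ?thesis
    unfolding critical_profile_def powr_mult powr_powr by simp
qed

lemma critical_profile_radicand:
  assumes "2 \<le> d" "0 < kap" "0 < l" "0 < x"
  shows "real d * (real d - 1) / (kap^2 * l^2) * mu
      + k * (real d - 1)^2 / (4 * l^2) * (critical_profile d kap x)^2
      + critical_coupling d kap l * critical_profile d kap x powr (2 * (real d + 1) / (real d - 1))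
    = real d * (real d - 1) / (kap^2 * l^2) * x powr (- (real d + 1)) * (1 + k * x^2 + mu * x^(d+1))"
proof -
  define s where "s = real d * (real d - 1) / (kap^2 * l^2)"
  define a where "a = critical_amplitude d kap"
  have kinetic: "k * (real d - 1)^2 / (4 * l^2) * a^2 = k * s"
    using assms(1-3)
    by (simp add: a_def critical_amplitude_def s_def power_mult_distrib power_divide field_simps)
      (simp add: power2_eq_square algebra_simps)
  have coupling: "critical_coupling d kap l * a powr (2 * (real d + 1) / (real d - 1)) = s"
    using critical_coupling_scaling[OF assms(1-3)] by (simp add: a_def s_def)
  have "x powr (1 - real d) = x powr (- (real d + 1) + real 2)"
    by (rule arg_cong[of _ _ "(powr) x"]) simp
  also have "\<dots> = x powr (- (real d + 1)) * x^2"
    unfolding powr_add powr_realpow[OF assms(4)] ..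
  finally have quadratic: "x powr (1 - real d) = x powr (- (real d + 1)) * x^2" .
  have "x powr (- (real d + 1)) * x^(d+1) = x powr (- (real d + 1)) * x powr real (d+1)"
    unfolding powr_realpow[OF assms(4)] ..
  also have "\<dots> = x powr (- (real d + 1) + real (d+1))"
    by (rule powr_add[symmetric])
  finally have leading: "x powr (- (real d + 1)) * x^(d+1) = 1"
    using assms(4) by simp
  have "s * mu + k * (real d - 1)^2 / (4 * l^2) * (critical_profile d kap x)^2
      + critical_coupling d kap l * critical_profile d kap x powr (2 * (real d + 1) / (real d - 1))
    = s * mu + (k * (real d - 1)^2 / (4 * l^2) * a^2) * x powr (1 - real d)
      + (critical_coupling d kap l * a powr (2 * (real d + 1) / (real d - 1))) * x powr (- (real d + 1))"
    unfolding critical_profile_power2[OF assms(4)] critical_profile_powr[OF assms(1)] a_def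
    by (simp add: mult.assoc)
  also have "\<dots> = s * x powr (- (real d + 1)) * (1 + k * x^2 + mu * x^(d+1))"
    unfolding kinetic coupling quadratic using leading by (simp add: algebra_simps)
  finally show ?thesis
    unfolding s_def .
qed

lemma critical_profile_substitution:
  assumes "2 \<le> d" "0 < kap" "0 < l" "0 < x"
  shows "- sqrt (real d * (real d - 1)) / kap * x powr (- (real d + 1) / 2)
           * phi_integrand d kap l mu k (critical_coupling d kap l) (critical_profile d kap x)
         = - l * u_integrand d k mu x"
proof -
  define s where "s = real d * (real d - 1) / (kap^2 * l^2)"
  define X where "X = x powr (- (real d + 1) / 2)"
  have "0 < s" "0 < X"
    using assms by (simp_all add: s_def X_def)
  have "sqrt (x powr (- (real d + 1))) = X"
    using assms(4) by (simp add: X_def powr_half_sqrt_powr)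
  then have "phi_integrand d kap l mu k (critical_coupling d kap l) (critical_profile d kap x)
      = 1 / (sqrt s * X) * u_integrand d k mu x"
    unfolding phi_integrand_def critical_profile_radicand[OF assms]
    unfolding u_integrand_def s_def[symmetric] by (simp add: real_sqrt_mult)
  moreover have "sqrt s = sqrt (real d * (real d - 1)) / (kap * l)"
    using assms(2,3) by (simp add: s_def real_sqrt_divide real_sqrt_mult)
  then have "- sqrt (real d * (real d - 1)) / kap * X * (1 / (sqrt s * X)) = - l"
    using assms \<open>0 < s\<close> \<open>0 < X\<close> by (simp add: field_simps)
  ultimately show ?thesis
    unfolding X_def[symmetric] by (metis mult.assoc)
qed

lemma integral_critical_substitution:
  assumes "2 \<le> d" "0 < kap" "0 < l" "0 \<le> k" "0 < mu" "0 < v" "v \<le> w"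
  shows "integral {critical_profile d kap w..critical_profile d kap v}
           (phi_integrand d kap l mu k (critical_coupling d kap l))
         = l * integral {v..w} (u_integrand d k mu)"
proof -
  let ?F = "phi_integrand d kap l mu k (critical_coupling d kap l)"
  let ?\<Psi> = "critical_profile d kap"
  let ?\<Psi>' = "\<lambda>x. - sqrt (real d * (real d - 1)) / kap * x powr (- (real d + 1) / 2)"
  have \<Psi>_pos: "0 < ?\<Psi> x" if "0 < x" for x
    using that critical_amplitude_pos[OF assms(1,2)] by (simp add: critical_profile_def)
  have F_cont: "continuous_on {0<..} ?F"
    using assms critical_coupling_pos[OF assms(1-3)] by (intro continuous_on_phi_integrand) auto
  have "(LBINT x=v..w. ?\<Psi>' x *\<^sub>R ?F (?\<Psi> x)) = (LBINT y=?\<Psi> v..?\<Psi> w. ?F y)"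
  proof (rule interval_integral_substitution_finite[OF assms(7)])
    show "(?\<Psi> has_real_derivative ?\<Psi>' x) (at x within {v..w})" if "v \<le> x" "x \<le> w" for x
      using that assms
      by (intro has_field_derivative_at_within[OF has_real_derivative_critical_profile]) auto
    show "continuous_on (?\<Psi> ` {v..w}) ?F"
      by (rule continuous_on_subset[OF F_cont], rule image_subsetI) (use \<Psi>_pos assms(6) in auto)
    show "continuous_on {v..w} ?\<Psi>'"
      using assms by (intro continuous_intros) auto
  qed
  also have "\<dots> = - integral {?\<Psi> w..?\<Psi> v} ?F"
  proof -
    have "?\<Psi> w \<le> ?\<Psi> v"
      using critical_profile_antimono[OF assms(1,2,6,7)] .
    moreover have "continuous_on {?\<Psi> w..?\<Psi> v} ?F"
      by (rule continuous_on_subset[OF F_cont]) (use \<Psi>_pos[of w] assms(6,7) in auto)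
    ultimately show ?thesis
      using interval_integral_endpoints_reverse interval_integral_eq_integral_continuous by metis
  qed
  finally have "(LBINT x=v..w. ?\<Psi>' x *\<^sub>R ?F (?\<Psi> x)) = - integral {?\<Psi> w..?\<Psi> v} ?F" .
  moreover have "(LBINT x=v..w. ?\<Psi>' x *\<^sub>R ?F (?\<Psi> x)) = (LBINT x=v..w. - l * u_integrand d k mu x)"
  proof (rule interval_integral_cong)
    fix x assume "x \<in> einterval (min (ereal v) (ereal w)) (max (ereal v) (ereal w))"
    then have "0 < x"
      using assms(6,7) by (auto simp: einterval_iff min_def)
    then show "?\<Psi>' x *\<^sub>R ?F (?\<Psi> x) = - l * u_integrand d k mu x"
      unfolding real_scaleR_def by (rule critical_profile_substitution[OF assms(1-3)])
  qed
  moreover have "(LBINT x=v..w. - l * u_integrand d k mu x) = integral {v..w} (\<lambda>x. - l * u_integrand d k mu x)"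
    using assms
    by (intro interval_integral_eq_integral_continuous continuous_on_mult continuous_on_const
        continuous_on_subset[OF continuous_on_u_integrand[OF assms(4,5)]]) auto
  ultimately show ?thesis by simp
qed

lemma supercritical_wall_integral_le:
  fixes u :: real
  assumes "2 \<le> d" "0 < kap" "0 < l" "0 \<le> k" "0 < mu" "critical_coupling d kap l \<le> lam"
    and "0 < v0" "v0 \<le> w" "0 \<le> u"
    and wall: "(LBINT p=critical_profile d kap v0..critical_profile d kap w. phi_integrand d kap l mu k lam p)
      = - l * (LBINT v=0..u. u_integrand d k mu v)"
  shows "integral {0..u} (u_integrand d k mu) \<le> integral {v0..w} (u_integrand d k mu)"
proof -
  let ?G = "u_integrand d k mu"
  let ?\<Psi> = "critical_profile d kap"
  have "0 < ?\<Psi> w"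
    using assms(1,2,7,8) critical_amplitude_pos[OF assms(1,2)] by (simp add: critical_profile_def)
  have "?\<Psi> w \<le> ?\<Psi> v0"
    using critical_profile_antimono[OF assms(1,2,7,8)] .
  have "0 \<le> lam"
    using critical_coupling_pos[OF assms(1-3)] assms(6) by linarith
  have "l * integral {0..u} ?G = integral {?\<Psi> w..?\<Psi> v0} (phi_integrand d kap l mu k lam)"
  proof -
    have "continuous_on {?\<Psi> w..?\<Psi> v0} (phi_integrand d kap l mu k lam)"
      using assms(1-5) \<open>0 \<le> lam\<close> \<open>0 < ?\<Psi> w\<close>
      by (intro continuous_on_subset[OF continuous_on_phi_integrand]) auto
    then have "(LBINT p=?\<Psi> v0..?\<Psi> w. phi_integrand d kap l mu k lam p)
        = - integral {?\<Psi> w..?\<Psi> v0} (phi_integrand d kap l mu k lam)"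
      using \<open>?\<Psi> w \<le> ?\<Psi> v0\<close> interval_integral_endpoints_reverse
        interval_integral_eq_integral_continuous by metis
    moreover have "(LBINT v=0..u. ?G v) = integral {0..u} ?G"
      using interval_integral_eq_integral_continuous[OF assms(9)]
        continuous_on_subset[OF continuous_on_u_integrand[OF assms(4,5)]]
      by (simp add: zero_ereal_def)
    ultimately show ?thesis
      using wall by simp
  qed
  also have "\<dots> \<le> integral {?\<Psi> w..?\<Psi> v0} (phi_integrand d kap l mu k (critical_coupling d kap l))"
    using assms(1-6) critical_coupling_pos[OF assms(1-3)] \<open>0 < ?\<Psi> w\<close>
    by (intro integral_phi_integrand_antimono_coupling) auto
  also have "\<dots> = l * integral {v0..w} ?G"
    using integral_critical_substitution[OF assms(1-5,7,8)] .
  finally show ?thesis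
    using assms(3) by simp
qed

lemma regular_domain_wall_subcritical:
  fixes phio :: real and phi :: "real \<Rightarrow> real"
  assumes "2 \<le> d" "0 < kap" "0 < l" "0 \<le> k" "0 < mu" "0 < phio"
    and phi_pos: "\<And>u. 0 \<le> u \<Longrightarrow> 0 < phi u"
    and phi_lim: "(phi \<longlongrightarrow> 0) at_top"
    and wall: "\<And>u. 0 \<le> u \<Longrightarrow>
      (LBINT p=phio..phi u. phi_integrand d kap l mu k lam p)
        = - l * (LBINT v=0..u. u_integrand d k mu v)"
  shows "lam < critical_coupling d kap l"
proof (rule ccontr)
  assume "\<not> lam < critical_coupling d kap l"
  then have supercritical: "critical_coupling d kap l \<le> lam" by simp
  let ?G = "u_integrand d k mu"
  obtain v0 where v0: "0 < v0" "critical_profile d kap v0 = phio"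
    using critical_profile_surj[OF assms(1,2,6)] .
  define c0 where "c0 = integral {0..v0} ?G"
  have "0 < c0"
    unfolding c0_def using integral_u_integrand_pos[OF assms(4,5) v0(1)] .
  have "\<forall>\<^sub>F u in at_top. phi u < phio \<and> max 1 v0 \<le> u \<and> 2 / sqrt (mu * u) < c0"
  proof (intro eventually_conj)
    show "\<forall>\<^sub>F u in at_top. phi u < phio"
      using order_tendstoD(2)[OF phi_lim assms(6)] .
    show "\<forall>\<^sub>F u in at_top. max 1 v0 \<le> u"
      by (rule eventually_ge_at_top)
    have "((\<lambda>u. 2 / sqrt (mu * u)) \<longlongrightarrow> 0) at_top"
      using assms(5) by real_asymp
    then show "\<forall>\<^sub>F u in at_top. 2 / sqrt (mu * u) < c0"
      using \<open>0 < c0\<close> by (rule order_tendstoD(2))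
  qed
  then obtain u where u: "phi u < phio" "max 1 v0 \<le> u" "2 / sqrt (mu * u) < c0"
    by (auto simp: eventually_at_top_linorder)
  then have "0 \<le> u" by simp
  obtain w where w: "0 < w" "critical_profile d kap w = phi u"
    using critical_profile_surj[OF assms(1,2) phi_pos[OF \<open>0 \<le> u\<close>]] .
  have "v0 < w"
    using critical_profile_less_iff[OF assms(1,2) w(1) v0(1)] u(1) v0(2) w(2) by simp
  have "integral {0..u} ?G \<le> integral {v0..w} ?G"
    using wall[OF \<open>0 \<le> u\<close>] \<open>v0 < w\<close> v0 w(2)
    by (intro supercritical_wall_integral_le[OF assms(1-5) supercritical v0(1) _ \<open>0 \<le> u\<close>]) auto
  moreover have "integral {0..u} ?G = c0 + integral {v0..u} ?G"
    unfolding c0_def using v0(1) u(2) assms(4,5)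
    by (intro Henstock_Kurzweil_Integration.integral_combine[symmetric] u_integrand_integrable) auto
  moreover have "integral {v0..w} ?G \<le> integral {v0..u} ?G + 2 / sqrt (mu * u)"
    using assms(1,4,5) v0(1) u(2) \<open>v0 < w\<close> by (intro integral_u_integrand_le_tail) auto
  ultimately show False
    using u(3) by linarith
qed

lemma critical_coupling_dim2:
  assumes "0 < kap" "0 < l"
  shows "critical_coupling 2 kap l = (kap^2 / (16 * l))^2"
  using assms by (simp add: critical_coupling_def)

lemma critical_coupling_dim3:
  assumes "0 < l"
  shows "critical_coupling 3 kap l = kap^2 / (6 * l^2)"
  using assms by (simp add: critical_coupling_def)

theorem mainTheorem11:
  fixes d :: nat and kap l lam mu phio :: real and k :: real and phi :: "real \<Rightarrow> real"
  assumes "d \<ge> 2" and "kap > 0" and "l > 0" and "lam > 0" and "k \<in> {0, 1}"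
    and "mu > 0" and "phio > 0"
    and "continuous_on {0..} phi"
    and "\<forall>u\<ge>0. phi u > 0"
    and "phi 0 = phio"
    and "(phi \<longlongrightarrow> 0) at_top"
    and "\<forall>u\<ge>0.
      (LBINT p=phio..phi u. 1 / sqrt (real d * (real d - 1) / (kap^2 * l^2) * mu
          + k * (real d - 1)^2 / (4 * l^2) * p^2
          + lam * p powr (2 * (real d + 1) / (real d - 1))))
      = - l * (LBINT v=0..u. 1 / sqrt (1 + k * v^2 + mu * v^(d+1)))"
  shows "lam < ((real d - 1)^d * kap^2 / (2^(d+1) * real d * l^(d-1))) powr (2 / (real d - 1))
    \<and> (d = 2 \<longrightarrow> sqrt lam \<noteq> kap^2 / (16 * l))
    \<and> (d = 3 \<longrightarrow> lam \<noteq> kap^2 / (6 * l^2))"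
proof -
  have wall: "(LBINT p=phio..phi u. phi_integrand d kap l mu k lam p)
      = - l * (LBINT v=0..u. u_integrand d k mu v)" if "0 \<le> u" for u
    using assms(12) that unfolding phi_integrand_def u_integrand_def by blast
  have "0 \<le> k" "\<And>u. 0 \<le> u \<Longrightarrow> 0 < phi u"
    using assms(5,9) by auto
  then have below: "lam < critical_coupling d kap l"
    using regular_domain_wall_subcritical[OF assms(1-3) _ assms(6,7) _ assms(11) wall]
    by blast
  have "sqrt lam \<noteq> kap^2 / (16 * l)" if "d = 2"
  proof -
    have "sqrt lam < sqrt ((kap^2 / (16 * l))^2)"
      using below assms(2,3) that by (intro real_sqrt_less_mono) (simp add: critical_coupling_dim2)
    then show ?thesis
      using assms(3) by simp
  qed
  moreover have "lam \<noteq> kap^2 / (6 * l^2)" if "d = 3"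
    using below assms(3) that by (simp add: critical_coupling_dim3)
  ultimately show ?thesis
    using below unfolding critical_coupling_def by blast
qed

end
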